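(* There is an absolute constant $C>0$ such that the following holds. For all $\varepsilon\in(0,1)$, $\delta\in(0,1/2]$, and all $n,D\in\mathbb{N}$, there exists an $(\varepsilon,\delta)$-LNDP algorithm $\mathcal{A}$ on $n$-node graphs such that for every graph $G$ on node set $[n]$ with maximum degree at most $D$, having $m$ edges, \[ \mathbb{E}\big[|\mathcal{A}(G)-m|\big]\le C\,(D\sqrt{n}+n)\cdot\frac{\sqrt{\log(1/\delta)}}{\varepsilon}. \] (The algorithm is private for all graphs on $[n]$; only accuracy uses the degree bound.)
   Context: Graphs are simple and undirected on node set $[n]=\{1,\dots,n\}$; $N_i^G$ is the neighborhood of node $i$ in $G$ and $d_i=|N_i^G|$ its degree. Two graphs $G,G'$ on $[n]$ are node neighbors if they differ only in edges incident to a single node. Random variables $R_1,R_2$ on a common outcome space are $(\varepsilon,\delta)$-indistinguishable if for every measurable event $Y$, $\Pr[R_1\in Y]\le e^{\varepsilon}\Pr[R_2\in Y]+\delta$ and $\Pr[R_2\in Y]\le e^{\varepsilon}\Pr[R_1\in Y]+\delta$. An algorithm $\mathcal{A}$ on $n$-node graphs is (noninteractive) $(\varepsilon,\delta)$-LNDP if there exist a distribution over public random strings $\rho$, local randomizers $\mathcal{R}_{1,\rho},\dots,\mathcal{R}_{n,\rho}$ (randomized maps, run with independent internal randomness), and a postprocessing algorithm $\mathcal{P}$ such that $\mathcal{A}(G)=\mathcal{P}(\mathcal{R}_{1,\rho}(N_1^G),\dots,\mathcal{R}_{n,\rho}(N_n^G))$ with $\rho$ drawn from the public distribution, and for every fixed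 $\rho$ and every pair of node-neighboring graphs $G,G'$ on $[n]$ the vectors $(\mathcal{R}_{i,\rho}(N_i^G))_{i\in[n]}$ and $(\mathcal{R}_{i,\rho}(N_i^{G'}))_{i\in[n]}$ are $(\varepsilon,\delta)$-indistinguishable. *)

theory Defs
  imports "HOL-Probability.Probability"
begin

definition graph_on :: "nat \<Rightarrow> nat set set \<Rightarrow> bool" where
  "graph_on n E \<longleftrightarrow>
     (\<forall>e\<in>E. \<exists>u v. e = {u, v} \<and> u \<noteq> v \<and> u \<in> {1..n} \<and> v \<in> {1..n})"

definition nbhd :: "nat set set \<Rightarrow> nat \<Rightarrow> nat set" where
  "nbhd E i = {j. {i, j} \<in> E}"

definition degree :: "nat set set \<Rightarrow> nat \<Rightarrow> nat" where
  "degree E i = card (nbhd E i)"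

definition num_edges :: "nat set set \<Rightarrow> nat" where
  "num_edges E = card E"

definition max_degree_le :: "nat \<Rightarrow> nat set set \<Rightarrow> nat \<Rightarrow> bool" where
  "max_degree_le n E D \<longleftrightarrow> (\<forall>i\<in>{1..n}. degree E i \<le> D)"

definition node_neighbors :: "nat \<Rightarrow> nat set set \<Rightarrow> nat set set \<Rightarrow> bool" where
  "node_neighbors n E E' \<longleftrightarrow> graph_on n E \<and> graph_on n E' \<and>
     (\<exists>v\<in>{1..n}. \<forall>e. v \<notin> e \<longrightarrow> (e \<in> E \<longleftrightarrow> e \<in> E'))"

definition indist :: "real \<Rightarrow> real \<Rightarrow> 'a measure \<Rightarrow> 'a measure \<Rightarrow> bool" where
  "indist \<epsilon> \<delta> M1 M2 \<longleftrightarrow>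
     (\<forall>Y\<in>sets M1. measure M1 Y \<le> exp \<epsilon> * measure M2 Y + \<delta>
                 \<and> measure M2 Y \<le> exp \<epsilon> * measure M1 Y + \<delta>)"

text \<open>A noninteractive local algorithm on n-node graphs is represented by
  a distribution Rho of the public random string (here a nat),
  local randomizers R \<rho> i mapping the neighborhood of node i to a distribution
  on real-valued messages (run independently, i.e. jointly the product measure),
  and a postprocessing map P \<rho> of the message vector.\<close>

definition messages :: "nat \<Rightarrow> (nat \<Rightarrow> nat \<Rightarrow> nat set \<Rightarrow> real measure) \<Rightarrow> nat
    \<Rightarrow> nat set set \<Rightarrow> (nat \<Rightarrow> real) measure" where
  "messages n R \<rho> E = (\<Pi>\<^sub>M i\<in>{1..n}. R \<rho> i (nbhd E i))"

definition LNDP :: "nat \<Rightarrow> real \<Rightarrow> real \<Rightarrow> nat pmf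
    \<Rightarrow> (nat \<Rightarrow> nat \<Rightarrow> nat set \<Rightarrow> real measure)
    \<Rightarrow> (nat \<Rightarrow> (nat \<Rightarrow> real) \<Rightarrow> real) \<Rightarrow> bool" where
  "LNDP n \<epsilon> \<delta> Rho R P \<longleftrightarrow>
     (\<forall>\<rho> i S. prob_space (R \<rho> i S) \<and> sets (R \<rho> i S) = sets borel) \<and>
     (\<forall>\<rho>. P \<rho> \<in> borel_measurable (\<Pi>\<^sub>M i\<in>{1..n}. (borel :: real measure))) \<and>
     (\<forall>\<rho> E E'. node_neighbors n E E' \<longrightarrow>
        indist \<epsilon> \<delta> (messages n R \<rho> E) (messages n R \<rho> E'))"

definition expected_abs_error :: "nat \<Rightarrow> nat pmf
    \<Rightarrow> (nat \<Rightarrow> nat \<Rightarrow> nat set \<Rightarrow> real measure)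
    \<Rightarrow> (nat \<Rightarrow> (nat \<Rightarrow> real) \<Rightarrow> real) \<Rightarrow> nat set set \<Rightarrow> ennreal" where
  "expected_abs_error n Rho R P E =
     (\<integral>\<^sup>+ \<rho>. (\<integral>\<^sup>+ y. ennreal \<bar>P \<rho> y - real (num_edges E)\<bar> \<partial>(messages n R \<rho> E))
        \<partial>(measure_pmf Rho))"

end

(*
  Each node publishes its degree clipped at D plus independent N(0, sigma^2) noise, and the
  estimate is half the sum of the messages.

  Privacy: changing the edges at one node v moves the clipped degree of v by at most D and
  every other clipped degree by at most 1, so the two mean vectors are at squared distance at
  most D^2 + n.  For Gaussian vectors with means a and b the privacy loss
  L = ln (density_a / density_b) is affine; splitting an event according to whether L <= eps,
  and bounding the part where L > eps by Markov's inequality for exp (l * L), the Gaussian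
  moment generating function yields the additive error
  exp (- l * eps + l * (l + 1) * |a - b|^2 / (2 * sigma^2)).  It is at most delta for
  sigma = 4 (D + sqrt n + 1) sqrt (ln (1/delta)) / eps and l = 2 ln (1/delta) / eps.

  Accuracy: if all degrees are at most D nothing is clipped, so by the handshake lemma the
  error is half the absolute value of a sum of n independent centred Gaussians.  Bounding |x|
  by (exp (t x) + exp (- t x)) / t with t = 1 / (sigma sqrt n) gives the bound 2 sigma sqrt n.
*)
theory Submission
  imports Defs
begin

section \<open>Products of densities and the privacy loss\<close>

lemma indicator_PiE_eq_prod:
  assumes "finite I" "x \<in> extensional I"
  shows "indicator (Pi\<^sub>E I A) x = (\<Prod>i\<in>I. indicator (A i) (x i) :: ennreal)"
  using assms by (auto simp: indicator_def PiE_def prod_zero intro!: prod.neutral)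

lemma PiM_density:
  fixes f :: "'i \<Rightarrow> 'a \<Rightarrow> ennreal"
  assumes I: "finite I"
    and "product_sigma_finite M" and "product_sigma_finite (\<lambda>i. density (M i) (f i))"
    and f[measurable]: "\<And>i. i \<in> I \<Longrightarrow> f i \<in> borel_measurable (M i)"
  shows "PiM I (\<lambda>i. density (M i) (f i)) = density (PiM I M) (\<lambda>x. \<Prod>i\<in>I. f i (x i))"
proof -
  interpret M: product_sigma_finite M by fact
  interpret Mf: product_sigma_finite "\<lambda>i. density (M i) (f i)" by fact
  have [measurable]: "(\<lambda>x. \<Prod>i\<in>I. f i (x i)) \<in> borel_measurable (PiM I M)"
    by measurable
  show ?thesis
  proof (rule Mf.PiM_eqI[symmetric, OF I])
    show "sets (density (PiM I M) (\<lambda>x. \<Prod>i\<in>I. f i (x i))) = sets (PiM I (\<lambda>i. density (M i) (f i)))"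
      by (auto intro!: sets_PiM_cong)
  next
    fix A assume "\<And>i. i \<in> I \<Longrightarrow> A i \<in> sets (density (M i) (f i))"
    then have A[measurable]: "\<And>i. i \<in> I \<Longrightarrow> A i \<in> sets (M i)" by simp
    have "emeasure (density (PiM I M) (\<lambda>x. \<Prod>i\<in>I. f i (x i))) (Pi\<^sub>E I A)
        = (\<integral>\<^sup>+ x. (\<Prod>i\<in>I. f i (x i)) * indicator (Pi\<^sub>E I A) x \<partial>PiM I M)"
      using I by (intro emeasure_density) auto
    also have "\<dots> = (\<integral>\<^sup>+ x. (\<Prod>i\<in>I. f i (x i) * indicator (A i) (x i)) \<partial>PiM I M)"
      using I by (intro nn_integral_cong) (simp add: space_PiM PiE_iff indicator_PiE_eq_prod prod.distrib)
    also have "\<dots> = (\<Prod>i\<in>I. \<integral>\<^sup>+ y. f i y * indicator (A i) y \<partial>M i)"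
      using I by (intro M.product_nn_integral_prod) auto
    also have "\<dots> = (\<Prod>i\<in>I. emeasure (density (M i) (f i)) (A i))"
      by (intro prod.cong refl) (simp add: emeasure_density)
    finally show "emeasure (density (PiM I M) (\<lambda>x. \<Prod>i\<in>I. f i (x i))) (Pi\<^sub>E I A)
        = (\<Prod>i\<in>I. emeasure (density (M i) (f i)) (A i))" .
  qed
qed

lemma mult_exp_le_exp_mult_add_tail:
  fixes p L l \<epsilon> :: real
  assumes "0 \<le> p" "0 \<le> l"
  shows "p * exp L \<le> exp \<epsilon> * p + p * exp L * exp (l * (L - \<epsilon>))"
proof (cases "L \<le> \<epsilon>")
  case True
  then have "p * exp L \<le> exp \<epsilon> * p"
    using assms(1) by (simp add: mult.commute mult_left_mono)
  then show ?thesis using assms(1) by (simp add: add_increasing2)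
next
  case False
  then have "1 \<le> exp (l * (L - \<epsilon>))" using assms(2) by simp
  moreover have "0 \<le> p * exp L" using assms(1) by simp
  ultimately have "p * exp L \<le> p * exp L * exp (l * (L - \<epsilon>))"
    by (simp add: mult_le_cancel_left1)
  then show ?thesis using assms(1) by (simp add: add_increasing)
qed

lemma emeasure_density_le_exp_plus_tail:
  fixes fa fb L :: "'a \<Rightarrow> real"
  assumes [measurable]: "fa \<in> borel_measurable N" "fb \<in> borel_measurable N" "L \<in> borel_measurable N"
    "Y \<in> sets N"
    and fb_nonneg: "\<And>x. 0 \<le> fb x" and ratio: "\<And>x. fa x = fb x * exp (L x)" and "0 \<le> l"
  shows "emeasure (density N fa) Y
    \<le> ennreal (exp \<epsilon>) * emeasure (density N fb) Y
       + (\<integral>\<^sup>+ x. ennreal (exp (l * (L x - \<epsilon>))) \<partial>density N fa)"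
proof -
  have fa_nonneg: "0 \<le> fa x" for x by (simp add: ratio fb_nonneg)
  have pointwise: "fa x \<le> exp \<epsilon> * fb x + fa x * exp (l * (L x - \<epsilon>))" for x
    unfolding ratio using fb_nonneg \<open>0 \<le> l\<close> by (rule mult_exp_le_exp_mult_add_tail)
  have pointwise_ennreal: "ennreal (fa x) * indicator Y x
      \<le> ennreal (exp \<epsilon>) * (ennreal (fb x) * indicator Y x) + ennreal (fa x) * ennreal (exp (l * (L x - \<epsilon>)))"
    for x
  proof (cases "x \<in> Y")
    case True
    have "ennreal (fa x) \<le> ennreal (exp \<epsilon> * fb x + fa x * exp (l * (L x - \<epsilon>)))"
      using pointwise by (rule ennreal_leI)
    also have "\<dots> = ennreal (exp \<epsilon>) * ennreal (fb x) + ennreal (fa x) * ennreal (exp (l * (L x - \<epsilon>)))"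
      using fa_nonneg[of x] fb_nonneg[of x] by (simp add: ennreal_plus ennreal_mult)
    finally show ?thesis using True by simp
  qed simp
  have "emeasure (density N fa) Y = (\<integral>\<^sup>+ x. ennreal (fa x) * indicator Y x \<partial>N)"
    by (rule emeasure_density) simp_all
  also have "\<dots> \<le> (\<integral>\<^sup>+ x. ennreal (exp \<epsilon>) * (ennreal (fb x) * indicator Y x)
                    + ennreal (fa x) * ennreal (exp (l * (L x - \<epsilon>))) \<partial>N)"
    by (intro nn_integral_mono pointwise_ennreal)
  also have "\<dots> = ennreal (exp \<epsilon>) * (\<integral>\<^sup>+ x. ennreal (fb x) * indicator Y x \<partial>N)
       + (\<integral>\<^sup>+ x. ennreal (fa x) * ennreal (exp (l * (L x - \<epsilon>))) \<partial>N)"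
    by (simp add: nn_integral_add nn_integral_cmult)
  also have "(\<integral>\<^sup>+ x. ennreal (fb x) * indicator Y x \<partial>N) = emeasure (density N fb) Y"
    by (rule emeasure_density[symmetric]) simp_all
  also have "(\<integral>\<^sup>+ x. ennreal (fa x) * ennreal (exp (l * (L x - \<epsilon>))) \<partial>N)
      = (\<integral>\<^sup>+ x. ennreal (exp (l * (L x - \<epsilon>))) \<partial>density N fa)"
    by (rule nn_integral_density[symmetric]) simp_all
  finally show ?thesis .
qed

section \<open>Gaussian vectors\<close>

lemma normal_density_mult_exp:
  fixes \<mu> \<sigma> s x :: real
  assumes "0 < \<sigma>"
  shows "normal_density \<mu> \<sigma> x * exp (s * (x - \<mu>))
    = exp (s\<^sup>2 * \<sigma>\<^sup>2 / 2) * normal_density (\<mu> + s * \<sigma>\<^sup>2) \<sigma> x"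
proof -
  have "- (x - \<mu>)\<^sup>2 / (2 * \<sigma>\<^sup>2) + s * (x - \<mu>) = s\<^sup>2 * \<sigma>\<^sup>2 / 2 + - (x - (\<mu> + s * \<sigma>\<^sup>2))\<^sup>2 / (2 * \<sigma>\<^sup>2)"
    using assms by (simp add: field_simps power2_eq_square)
  then show ?thesis
    unfolding normal_density_def by (simp add: mult_ac flip: exp_add)
qed

lemma normal_density_eq_mult_exp:
  fixes a b \<sigma> y :: real
  assumes "0 < \<sigma>"
  shows "normal_density a \<sigma> y
    = normal_density b \<sigma> y * exp ((a - b) * (y - a) / \<sigma>\<^sup>2 + (a - b)\<^sup>2 / (2 * \<sigma>\<^sup>2))"
proof -
  have "- (y - a)\<^sup>2 / (2 * \<sigma>\<^sup>2) = - (y - b)\<^sup>2 / (2 * \<sigma>\<^sup>2) + ((a - b) * (y - a) / \<sigma>\<^sup>2 + (a - b)\<^sup>2 / (2 * \<sigma>\<^sup>2))"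
    using assms by (simp add: field_simps power2_eq_square)
  then show ?thesis
    unfolding normal_density_def by (simp add: mult_ac flip: exp_add)
qed

lemma nn_integral_normal_density_exp:
  assumes "0 < \<sigma>"
  shows "(\<integral>\<^sup>+ x. ennreal (exp (s * (x - \<mu>))) \<partial>density lborel (normal_density \<mu> \<sigma>))
    = ennreal (exp (s\<^sup>2 * \<sigma>\<^sup>2 / 2))"
proof -
  have "(\<integral>\<^sup>+ x. ennreal (exp (s * (x - \<mu>))) \<partial>density lborel (normal_density \<mu> \<sigma>))
      = (\<integral>\<^sup>+ x. ennreal (normal_density \<mu> \<sigma> x * exp (s * (x - \<mu>))) \<partial>lborel)"
    by (simp add: nn_integral_density ennreal_mult')
  also have "\<dots> = (\<integral>\<^sup>+ x. ennreal (exp (s\<^sup>2 * \<sigma>\<^sup>2 / 2)) * ennreal (normal_density (\<mu> + s * \<sigma>\<^sup>2) \<sigma> x) \<partial>lborel)"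
    using assms by (simp add: normal_density_mult_exp ennreal_mult')
  also have "\<dots> = ennreal (exp (s\<^sup>2 * \<sigma>\<^sup>2 / 2))"
    using assms by (simp add: nn_integral_cmult nn_integral_eq_integral)
  finally show ?thesis .
qed

definition gaussian_vector :: "'i set \<Rightarrow> ('i \<Rightarrow> real) \<Rightarrow> real \<Rightarrow> ('i \<Rightarrow> real) measure" where
  "gaussian_vector I \<mu> \<sigma> = (\<Pi>\<^sub>M i\<in>I. density lborel (normal_density (\<mu> i) \<sigma>))"

lemma prob_space_gaussian_vector: "0 < \<sigma> \<Longrightarrow> prob_space (gaussian_vector I \<mu> \<sigma>)"
  unfolding gaussian_vector_def by (intro prob_space_PiM prob_space_normal_density)

lemma product_sigma_finite_normal_density:
  "0 < \<sigma> \<Longrightarrow> product_sigma_finite (\<lambda>i. density lborel (normal_density (\<mu> i) \<sigma>))"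
  unfolding product_sigma_finite_def
  using prob_space_normal_density prob_space_imp_sigma_finite by blast

lemma sets_gaussian_vector [measurable_cong]:
  "sets (gaussian_vector I \<mu> \<sigma>) = sets (\<Pi>\<^sub>M i\<in>I. (lborel :: real measure))"
  unfolding gaussian_vector_def by (intro sets_PiM_cong) auto

lemma gaussian_vector_eq_density:
  assumes "finite I" "0 < \<sigma>"
  shows "gaussian_vector I \<mu> \<sigma>
    = density (\<Pi>\<^sub>M i\<in>I. lborel) (\<lambda>x. ennreal (\<Prod>i\<in>I. normal_density (\<mu> i) \<sigma> (x i)))"
proof -
  have "gaussian_vector I \<mu> \<sigma>
      = density (\<Pi>\<^sub>M i\<in>I. lborel) (\<lambda>x. \<Prod>i\<in>I. ennreal (normal_density (\<mu> i) \<sigma> (x i)))"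
  proof -
    have "product_sigma_finite (\<lambda>_::'i. lborel :: real measure)" by standard
    then show ?thesis
      unfolding gaussian_vector_def using assms product_sigma_finite_normal_density[OF assms(2)]
      by (intro PiM_density) auto
  qed
  then show ?thesis by (simp add: prod_ennreal)
qed

lemma nn_integral_gaussian_vector_exp:
  assumes "finite I" "0 < \<sigma>"
  shows "(\<integral>\<^sup>+ x. ennreal (exp (\<Sum>i\<in>I. s i * (x i - \<mu> i))) \<partial>gaussian_vector I \<mu> \<sigma>)
    = ennreal (exp (\<sigma>\<^sup>2 / 2 * (\<Sum>i\<in>I. (s i)\<^sup>2)))"
proof -
  interpret product_sigma_finite "\<lambda>i. density lborel (normal_density (\<mu> i) \<sigma>)"
    using product_sigma_finite_normal_density[OF assms(2)] .
  have "(\<integral>\<^sup>+ x. ennreal (exp (\<Sum>i\<in>I. s i * (x i - \<mu> i))) \<partial>gaussian_vector I \<mu> \<sigma>)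
      = (\<integral>\<^sup>+ x. (\<Prod>i\<in>I. ennreal (exp (s i * (x i - \<mu> i)))) \<partial>gaussian_vector I \<mu> \<sigma>)"
    by (simp add: exp_sum assms prod_ennreal)
  also have "\<dots> = (\<Prod>i\<in>I. \<integral>\<^sup>+ y. ennreal (exp (s i * (y - \<mu> i))) \<partial>density lborel (normal_density (\<mu> i) \<sigma>))"
    unfolding gaussian_vector_def using assms(1) by (rule product_nn_integral_prod) simp
  also have "\<dots> = (\<Prod>i\<in>I. ennreal (exp ((s i)\<^sup>2 * \<sigma>\<^sup>2 / 2)))"
    using assms(2) by (simp add: nn_integral_normal_density_exp)
  also have "\<dots> = ennreal (exp (\<Sum>i\<in>I. (s i)\<^sup>2 * \<sigma>\<^sup>2 / 2))"
    by (simp add: prod_ennreal exp_sum assms(1))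
  also have "(\<Sum>i\<in>I. (s i)\<^sup>2 * \<sigma>\<^sup>2 / 2) = \<sigma>\<^sup>2 / 2 * (\<Sum>i\<in>I. (s i)\<^sup>2)"
    unfolding sum_distrib_left by (simp add: mult.commute)
  finally show ?thesis .
qed

lemma emeasure_gaussian_vector_le:
  fixes a b :: "'i \<Rightarrow> real"
  assumes I: "finite I" and \<sigma>: "0 < \<sigma>" and l: "0 \<le> l"
    and Y: "Y \<in> sets (\<Pi>\<^sub>M i\<in>I. (lborel :: real measure))"
  shows "emeasure (gaussian_vector I a \<sigma>) Y
    \<le> ennreal (exp \<epsilon>) * emeasure (gaussian_vector I b \<sigma>) Y
       + ennreal (exp (- l * \<epsilon> + l * (l + 1) * (\<Sum>i\<in>I. (a i - b i)\<^sup>2) / (2 * \<sigma>\<^sup>2)))"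
proof -
  define dist2 where "dist2 = (\<Sum>i\<in>I. (a i - b i)\<^sup>2)"
  define f where "f c x = (\<Prod>i\<in>I. normal_density (c i) \<sigma> (x i))" for c and x :: "'i \<Rightarrow> real"
  define L where "L x = (\<Sum>i\<in>I. (a i - b i) * (x i - a i) / \<sigma>\<^sup>2) + dist2 / (2 * \<sigma>\<^sup>2)"
    for x :: "'i \<Rightarrow> real"
  define s where "s i = l * (a i - b i) / \<sigma>\<^sup>2" for i
  have [measurable]: "f c \<in> borel_measurable (\<Pi>\<^sub>M i\<in>I. lborel)" for c
    unfolding f_def by measurable
  have [measurable]: "L \<in> borel_measurable (\<Pi>\<^sub>M i\<in>I. lborel)"
    unfolding L_def by measurable
  have ratio: "f a x = f b x * exp (L x)" for x
  proof -
    have "f a x = (\<Prod>i\<in>I. normal_density (b i) \<sigma> (x i)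
                      * exp ((a i - b i) * (x i - a i) / \<sigma>\<^sup>2 + (a i - b i)\<^sup>2 / (2 * \<sigma>\<^sup>2)))"
      unfolding f_def using \<sigma> by (intro prod.cong refl normal_density_eq_mult_exp)
    also have "\<dots> = f b x * exp (L x)"
      unfolding f_def L_def dist2_def prod.distrib
      by (simp add: exp_sum[OF I, symmetric] sum.distrib sum_divide_distrib)
    finally show ?thesis .
  qed
  have loss: "l * (L x - \<epsilon>) = (\<Sum>i\<in>I. s i * (x i - a i)) + (l * dist2 / (2 * \<sigma>\<^sup>2) - l * \<epsilon>)" for x
    unfolding L_def s_def by (simp add: sum_distrib_left algebra_simps)
  have tail: "(\<integral>\<^sup>+ x. ennreal (exp (l * (L x - \<epsilon>))) \<partial>gaussian_vector I a \<sigma>)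
      = ennreal (exp (- l * \<epsilon> + l * (l + 1) * dist2 / (2 * \<sigma>\<^sup>2)))"
  proof -
    have "(\<integral>\<^sup>+ x. ennreal (exp (l * (L x - \<epsilon>))) \<partial>gaussian_vector I a \<sigma>)
        = (\<integral>\<^sup>+ x. ennreal (exp (\<Sum>i\<in>I. s i * (x i - a i))) \<partial>gaussian_vector I a \<sigma>)
          * ennreal (exp (l * dist2 / (2 * \<sigma>\<^sup>2) - l * \<epsilon>))"
      by (simp add: loss exp_add ennreal_mult' nn_integral_multc)
    also have "\<dots> = ennreal (exp (\<sigma>\<^sup>2 / 2 * (\<Sum>i\<in>I. (s i)\<^sup>2)) * exp (l * dist2 / (2 * \<sigma>\<^sup>2) - l * \<epsilon>))"
      by (simp add: nn_integral_gaussian_vector_exp I \<sigma> ennreal_mult')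
    also have "\<sigma>\<^sup>2 / 2 * (\<Sum>i\<in>I. (s i)\<^sup>2) = l\<^sup>2 * dist2 / (2 * \<sigma>\<^sup>2)"
    proof -
      have "\<sigma>\<^sup>2 / 2 * (s i)\<^sup>2 = l\<^sup>2 * (a i - b i)\<^sup>2 / (2 * \<sigma>\<^sup>2)" for i
        unfolding s_def using \<sigma> by (simp add: power_divide power_mult_distrib field_simps power2_eq_square)
      then show ?thesis unfolding dist2_def sum_distrib_left sum_divide_distrib by (simp only:)
    qed
    finally show ?thesis
      by (simp add: algebra_simps power2_eq_square add_divide_distrib flip: exp_add)
  qed
  have "emeasure (gaussian_vector I a \<sigma>) Y
      \<le> ennreal (exp \<epsilon>) * emeasure (gaussian_vector I b \<sigma>) Y
         + (\<integral>\<^sup>+ x. ennreal (exp (l * (L x - \<epsilon>))) \<partial>gaussian_vector I a \<sigma>)"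
    unfolding gaussian_vector_eq_density[OF I \<sigma>] f_def[symmetric]
    by (rule emeasure_density_le_exp_plus_tail) (use Y ratio l in \<open>auto simp: f_def prod_nonneg\<close>)
  then show ?thesis unfolding tail dist2_def .
qed

lemma indist_gaussian_vector:
  fixes a b :: "'i \<Rightarrow> real"
  assumes I: "finite I" and \<sigma>: "0 < \<sigma>" and l: "0 \<le> l"
    and dist: "(\<Sum>i\<in>I. (a i - b i)\<^sup>2) \<le> K"
    and \<delta>: "exp (- l * \<epsilon> + l * (l + 1) * K / (2 * \<sigma>\<^sup>2)) \<le> \<delta>"
  shows "indist \<epsilon> \<delta> (gaussian_vector I a \<sigma>) (gaussian_vector I b \<sigma>)"
proof -
  have "0 \<le> \<delta>" using \<delta> by (meson exp_ge_zero order_trans)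
  have one_side: "measure (gaussian_vector I c \<sigma>) Y \<le> exp \<epsilon> * measure (gaussian_vector I d \<sigma>) Y + \<delta>"
    if dist_cd: "(\<Sum>i\<in>I. (c i - d i)\<^sup>2) \<le> K" and Y: "Y \<in> sets (\<Pi>\<^sub>M i\<in>I. (lborel :: real measure))"
    for c d Y
  proof -
    interpret c: prob_space "gaussian_vector I c \<sigma>" using \<sigma> by (rule prob_space_gaussian_vector)
    interpret d: prob_space "gaussian_vector I d \<sigma>" using \<sigma> by (rule prob_space_gaussian_vector)
    have "l * (l + 1) * (\<Sum>i\<in>I. (c i - d i)\<^sup>2) / (2 * \<sigma>\<^sup>2) \<le> l * (l + 1) * K / (2 * \<sigma>\<^sup>2)"
      using dist_cd l by (intro divide_right_mono mult_left_mono) auto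
    then have "exp (- l * \<epsilon> + l * (l + 1) * (\<Sum>i\<in>I. (c i - d i)\<^sup>2) / (2 * \<sigma>\<^sup>2)) \<le> \<delta>"
      using \<delta> by (smt (verit) exp_le_cancel_iff)
    then have "emeasure (gaussian_vector I c \<sigma>) Y
        \<le> ennreal (exp \<epsilon>) * emeasure (gaussian_vector I d \<sigma>) Y + ennreal \<delta>"
      using emeasure_gaussian_vector_le[OF I \<sigma> l Y, of c \<epsilon> d]
      by (meson add_left_mono ennreal_leI order_trans)
    then have "ennreal (c.prob Y) \<le> ennreal (exp \<epsilon>) * ennreal (d.prob Y) + ennreal \<delta>"
      by (simp add: c.emeasure_eq_measure d.emeasure_eq_measure)
    also have "\<dots> = ennreal (exp \<epsilon> * d.prob Y + \<delta>)"
      using \<open>0 \<le> \<delta>\<close> by (simp add: ennreal_plus ennreal_mult)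
    finally show ?thesis using \<open>0 \<le> \<delta>\<close> by (subst (asm) ennreal_le_iff) auto
  qed
  have "(\<Sum>i\<in>I. (b i - a i)\<^sup>2) \<le> K" using dist by (simp add: power2_commute)
  then show ?thesis
    unfolding indist_def sets_gaussian_vector using one_side dist by blast
qed

lemma abs_le_exp_plus_exp_neg:
  fixes t x :: real
  assumes "0 < t"
  shows "\<bar>x\<bar> \<le> (exp (t * x) + exp (- t * x)) / t"
proof -
  have "t * \<bar>x\<bar> \<le> exp (t * \<bar>x\<bar>)"
    using exp_ge_add_one_self[of "t * \<bar>x\<bar>"] by linarith
  also have "\<dots> \<le> exp (t * x) + exp (- t * x)"
    by (cases "0 \<le> x") (auto simp: add_increasing add_increasing2)
  finally show ?thesis using assms by (simp add: field_simps)
qed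

lemma nn_integral_abs_sum_gaussian_vector_le:
  assumes I: "finite I" and \<sigma>: "0 < \<sigma>" and t: "0 < t"
  shows "(\<integral>\<^sup>+ x. ennreal \<bar>\<Sum>i\<in>I. (x i - \<mu> i)\<bar> \<partial>gaussian_vector I \<mu> \<sigma>)
    \<le> ennreal (2 * exp (real (card I) * t\<^sup>2 * \<sigma>\<^sup>2 / 2) / t)"
proof -
  have mgf: "(\<integral>\<^sup>+ x. ennreal (exp (u * (\<Sum>i\<in>I. (x i - \<mu> i)))) \<partial>gaussian_vector I \<mu> \<sigma>)
      = ennreal (exp (real (card I) * t\<^sup>2 * \<sigma>\<^sup>2 / 2))" if "u = t \<or> u = - t" for u
    using nn_integral_gaussian_vector_exp[OF I \<sigma>, where s = "\<lambda>_. u" and \<mu> = \<mu>] that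
    by (auto simp: sum_distrib_left mult_ac)
  have pointwise: "ennreal \<bar>X\<bar> \<le> ennreal (1 / t) * ennreal (exp (t * X)) + ennreal (1 / t) * ennreal (exp (- t * X))"
    for X
  proof -
    have "ennreal \<bar>X\<bar> \<le> ennreal (1 / t * exp (t * X) + 1 / t * exp (- t * X))"
      using abs_le_exp_plus_exp_neg[OF t, of X] by (intro ennreal_leI) (simp add: add_divide_distrib)
    also have "\<dots> = ennreal (1 / t) * ennreal (exp (t * X)) + ennreal (1 / t) * ennreal (exp (- t * X))"
      using t by (simp add: ennreal_plus flip: ennreal_mult')
    finally show ?thesis .
  qed
  have "(\<integral>\<^sup>+ x. ennreal \<bar>\<Sum>i\<in>I. (x i - \<mu> i)\<bar> \<partial>gaussian_vector I \<mu> \<sigma>)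
      \<le> (\<integral>\<^sup>+ x. ennreal (1 / t) * ennreal (exp (t * (\<Sum>i\<in>I. (x i - \<mu> i))))
              + ennreal (1 / t) * ennreal (exp (- t * (\<Sum>i\<in>I. (x i - \<mu> i)))) \<partial>gaussian_vector I \<mu> \<sigma>)"
    by (intro nn_integral_mono pointwise)
  also have "\<dots> = ennreal (1 / t) * ennreal (exp (real (card I) * t\<^sup>2 * \<sigma>\<^sup>2 / 2))
      + ennreal (1 / t) * ennreal (exp (real (card I) * t\<^sup>2 * \<sigma>\<^sup>2 / 2))"
    using mgf[of t] mgf[of "- t"] by (simp add: nn_integral_add nn_integral_cmult)
  also have "\<dots> = ennreal (2 * exp (real (card I) * t\<^sup>2 * \<sigma>\<^sup>2 / 2) / t)"
    using t by (simp flip: ennreal_plus ennreal_mult')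
  finally show ?thesis .
qed

lemma nn_integral_abs_sum_gaussian_vector_le_sqrt:
  assumes I: "finite I" and \<sigma>: "0 < \<sigma>"
  shows "(\<integral>\<^sup>+ x. ennreal \<bar>\<Sum>i\<in>I. (x i - \<mu> i)\<bar> \<partial>gaussian_vector I \<mu> \<sigma>)
    \<le> ennreal (4 * \<sigma> * sqrt (card I))"
proof (cases "I = {}")
  case False
  define t where "t = 1 / (\<sigma> * sqrt (card I))"
  have card: "0 < real (card I)" using I False by (simp add: card_gt_0_iff)
  have t: "0 < t" unfolding t_def using \<sigma> card by simp
  have "exp (1 / 2 :: real) \<le> 2"
  proof -
    have "(exp (1 / 2 :: real))\<^sup>2 = exp 1" by (simp flip: exp_double)
    also have "\<dots> \<le> 2\<^sup>2" using exp_le by simp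
    finally show ?thesis by (rule power2_le_imp_le) simp
  qed
  then have "2 * exp (real (card I) * t\<^sup>2 * \<sigma>\<^sup>2 / 2) / t \<le> 4 * \<sigma> * sqrt (card I)"
    unfolding t_def using \<sigma> card by (simp add: power_divide power_mult_distrib)
  then show ?thesis
    using nn_integral_abs_sum_gaussian_vector_le[OF I \<sigma> t] by (meson ennreal_leI order_trans)
qed simp

section \<open>Degrees\<close>

lemma nbhd_subset:
  assumes "graph_on n E" shows "nbhd E i \<subseteq> {1..n}"
  using assms unfolding graph_on_def nbhd_def by (fastforce simp: doubleton_eq_iff)

lemma finite_nbhd: "graph_on n E \<Longrightarrow> finite (nbhd E i)"
  using finite_subset[OF nbhd_subset] by blast

lemma graph_on_finite:
  assumes "graph_on n E" shows "finite E"
proof -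
  have "E \<subseteq> Pow {1..n}"
    using assms unfolding graph_on_def by fastforce
  then show ?thesis by (rule finite_subset) simp
qed

lemma card_nbhd_eq_card_incident:
  assumes "graph_on n E"
  shows "card (nbhd E i) = card {e \<in> E. i \<in> e}"
proof (rule bij_betw_same_card)
  show "bij_betw (\<lambda>j. {i, j}) (nbhd E i) {e \<in> E. i \<in> e}"
  proof (rule bij_betwI')
    fix e assume e: "e \<in> {e \<in> E. i \<in> e}"
    with assms obtain u v where "e = {u, v}" unfolding graph_on_def by blast
    with e show "\<exists>j \<in> nbhd E i. e = {i, j}"
      by (auto simp: nbhd_def insert_commute)
  qed (auto simp: nbhd_def doubleton_eq_iff)
qed

lemma sum_card_nbhd:
  assumes G: "graph_on n E"
  shows "(\<Sum>i\<in>{1..n}. card (nbhd E i)) = 2 * card E"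
proof -
  have "(\<Sum>i\<in>{1..n}. card (nbhd E i)) = (\<Sum>i\<in>{1..n}. \<Sum>e\<in>E. if i \<in> e then 1 else 0)"
    using graph_on_finite[OF G]
    by (simp add: card_nbhd_eq_card_incident[OF G] sum.If_cases Int_def)
  also have "\<dots> = (\<Sum>e\<in>E. \<Sum>i\<in>{1..n}. if i \<in> e then 1 else 0)"
    by (rule sum.swap)
  also have "\<dots> = (\<Sum>e\<in>E. 2)"
  proof (rule sum.cong)
    fix e assume "e \<in> E"
    with G obtain u v where "e = {u, v}" "u \<noteq> v" "u \<in> {1..n}" "v \<in> {1..n}"
      unfolding graph_on_def by blast
    then have "{1..n} \<inter> {i. i \<in> e} = {u, v}" by auto
    then show "(\<Sum>i\<in>{1..n}. if i \<in> e then 1 else 0) = (2::nat)"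
      using \<open>u \<noteq> v\<close> by (simp add: sum.If_cases)
  qed simp
  finally show ?thesis by simp
qed

lemma nbhd_Diff_eq:
  assumes "\<forall>e. v \<notin> e \<longrightarrow> (e \<in> E \<longleftrightarrow> e \<in> E')" "i \<noteq> v"
  shows "nbhd E i - {v} = nbhd E' i - {v}"
  using assms by (auto simp: nbhd_def)

definition clipped_degree :: "nat \<Rightarrow> nat set \<Rightarrow> real" where
  "clipped_degree D S = real (min (card S) D)"

lemma abs_clipped_degree_diff_le: "\<bar>clipped_degree D S - clipped_degree D T\<bar> \<le> real D"
  unfolding clipped_degree_def by linarith

lemma abs_clipped_degree_diff_le_one:
  assumes "finite S" "finite T" "S - {v} = T - {v}"
  shows "\<bar>clipped_degree D S - clipped_degree D T\<bar> \<le> 1"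
proof -
  have "card S \<le> card (S - {v}) + 1" "card (S - {v}) \<le> card S"
       "card T \<le> card (T - {v}) + 1" "card (T - {v}) \<le> card T"
    using assms(1,2) by (auto simp: card_Diff_singleton_if)
  then show ?thesis unfolding clipped_degree_def using assms(3) by auto
qed

lemma sum_sq_clipped_degree_diff_le:
  assumes "node_neighbors n E E'"
  shows "(\<Sum>i\<in>{1..n}. (clipped_degree D (nbhd E i) - clipped_degree D (nbhd E' i))\<^sup>2)
    \<le> (real D)\<^sup>2 + real n"
proof -
  define f where "f i = (clipped_degree D (nbhd E i) - clipped_degree D (nbhd E' i))\<^sup>2" for i
  from assms obtain v where v: "v \<in> {1..n}" and same: "\<forall>e. v \<notin> e \<longrightarrow> (e \<in> E \<longleftrightarrow> e \<in> E')"
    unfolding node_neighbors_def by blast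
  have fin: "finite (nbhd E i)" "finite (nbhd E' i)" for i
    using assms finite_nbhd unfolding node_neighbors_def by auto
  have "f v \<le> (real D)\<^sup>2"
    unfolding f_def using abs_clipped_degree_diff_le
    by (metis abs_le_square_iff abs_of_nat)
  moreover have "(\<Sum>i\<in>{1..n} - {v}. f i) \<le> real n"
  proof -
    have "f i \<le> 1" if "i \<noteq> v" for i
      unfolding f_def abs_square_le_1
      using abs_clipped_degree_diff_le_one[OF fin nbhd_Diff_eq[OF same that]] .
    then have "(\<Sum>i\<in>{1..n} - {v}. f i) \<le> (\<Sum>i\<in>{1..n} - {v}. 1)"
      by (intro sum_mono) blast
    also have "\<dots> \<le> real n"
      using card_Diff1_le[of "{1..n}" v] by simp
    finally show ?thesis .
  qed
  ultimately show ?thesis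
    unfolding f_def[symmetric] using sum.remove[of "{1..n}" v f] v by simp
qed

section \<open>The Gaussian degree mechanism\<close>

definition gaussian_degree_randomizer :: "real \<Rightarrow> nat \<Rightarrow> nat \<Rightarrow> nat \<Rightarrow> nat set \<Rightarrow> real measure" where
  "gaussian_degree_randomizer \<sigma> D \<rho> i S = density lborel (normal_density (clipped_degree D S) \<sigma>)"

definition half_sum :: "nat \<Rightarrow> nat \<Rightarrow> (nat \<Rightarrow> real) \<Rightarrow> real" where
  "half_sum n \<rho> y = (\<Sum>i\<in>{1..n}. y i) / 2"

lemma messages_gaussian_degree_randomizer:
  "messages n (gaussian_degree_randomizer \<sigma> D) \<rho> E
    = gaussian_vector {1..n} (\<lambda>i. clipped_degree D (nbhd E i)) \<sigma>"
  unfolding messages_def gaussian_degree_randomizer_def gaussian_vector_def ..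

lemma LNDP_gaussian_degree_randomizer:
  assumes \<sigma>: "0 < \<sigma>" and l: "0 \<le> l"
    and \<delta>: "exp (- l * \<epsilon> + l * (l + 1) * ((real D)\<^sup>2 + real n) / (2 * \<sigma>\<^sup>2)) \<le> \<delta>"
  shows "LNDP n \<epsilon> \<delta> Rho (gaussian_degree_randomizer \<sigma> D) (half_sum n)"
  unfolding LNDP_def
proof (intro conjI allI impI)
  fix \<rho> i S
  show "prob_space (gaussian_degree_randomizer \<sigma> D \<rho> i S)"
    unfolding gaussian_degree_randomizer_def using \<sigma> by (rule prob_space_normal_density)
  show "sets (gaussian_degree_randomizer \<sigma> D \<rho> i S) = sets borel"
    unfolding gaussian_degree_randomizer_def by simp
next
  fix \<rho>
  show "half_sum n \<rho> \<in> borel_measurable (\<Pi>\<^sub>M i\<in>{1..n}. borel)"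
    unfolding half_sum_def by measurable
next
  fix \<rho> E E' assume "node_neighbors n E E'"
  then show "indist \<epsilon> \<delta> (messages n (gaussian_degree_randomizer \<sigma> D) \<rho> E)
                         (messages n (gaussian_degree_randomizer \<sigma> D) \<rho> E')"
    unfolding messages_gaussian_degree_randomizer
    by (intro indist_gaussian_vector[OF _ \<sigma> l sum_sq_clipped_degree_diff_le \<delta>]) simp
qed

lemma nn_integral_abs_half_sum_error_le:
  assumes G: "graph_on n E" and "max_degree_le n E D" and \<sigma>: "0 < \<sigma>"
  shows "(\<integral>\<^sup>+ y. ennreal \<bar>half_sum n \<rho> y - real (num_edges E)\<bar>
             \<partial>messages n (gaussian_degree_randomizer \<sigma> D) \<rho> E)
    \<le> ennreal (2 * \<sigma> * sqrt n)"
proof -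
  define a where "a i = clipped_degree D (nbhd E i)" for i
  have "(\<Sum>i\<in>{1..n}. a i) = real (\<Sum>i\<in>{1..n}. card (nbhd E i))"
    using assms(2) by (simp add: a_def clipped_degree_def max_degree_le_def degree_def)
  then have sum_a: "(\<Sum>i\<in>{1..n}. a i) = 2 * real (num_edges E)"
    unfolding sum_card_nbhd[OF G] num_edges_def by simp
  have error: "half_sum n \<rho> y - real (num_edges E) = (\<Sum>i\<in>{1..n}. (y i - a i)) / 2" for y
    unfolding half_sum_def sum_subtractf sum_a by simp
  have "(\<integral>\<^sup>+ y. ennreal \<bar>half_sum n \<rho> y - real (num_edges E)\<bar>
             \<partial>messages n (gaussian_degree_randomizer \<sigma> D) \<rho> E)
      = (\<integral>\<^sup>+ y. ennreal \<bar>\<Sum>i\<in>{1..n}. (y i - a i)\<bar> \<partial>gaussian_vector {1..n} a \<sigma>) / 2"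
    unfolding messages_gaussian_degree_randomizer a_def[symmetric] error
    by (simp add: nn_integral_divide flip: ennreal_divide_numeral)
  also have "\<dots> \<le> ennreal (4 * \<sigma> * sqrt n) / 2"
    using nn_integral_abs_sum_gaussian_vector_le_sqrt[OF _ \<sigma>, of "{1..n}" a]
    by (intro divide_right_mono_ennreal) simp_all
  also have "\<dots> = ennreal (2 * \<sigma> * sqrt n)"
    using \<sigma> by (simp add: ennreal_divide_numeral)
  finally show ?thesis .
qed

lemma exp_gaussian_privacy_loss_le:
  fixes \<epsilon> \<delta> K S :: real
  assumes \<epsilon>: "0 < \<epsilon>" "\<epsilon> < 1" and \<delta>: "0 < \<delta>" "\<delta> \<le> 1/2" and K: "0 < K" and S: "S \<le> K\<^sup>2"
  defines "L \<equiv> ln (1 / \<delta>)"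
  defines "\<sigma> \<equiv> 4 * K * sqrt L / \<epsilon>" and "l \<equiv> 2 * L / \<epsilon>"
  shows "exp (- l * \<epsilon> + l * (l + 1) * S / (2 * \<sigma>\<^sup>2)) \<le> \<delta>"
proof -
  have "ln 2 \<le> L" unfolding L_def using \<delta> by (subst ln_le_cancel_iff) (auto simp: field_simps)
  then have L: "2/3 \<le> L" using ln2_ge_two_thirds by linarith
  have "l * (l + 1) * S / (2 * \<sigma>\<^sup>2) \<le> l * (l + 1) * K\<^sup>2 / (2 * \<sigma>\<^sup>2)"
    using S L \<epsilon> unfolding l_def by (intro divide_right_mono mult_left_mono) auto
  also have "\<dots> = (2 * L + \<epsilon>) / 16"
  proof -
    have \<sigma>2: "\<sigma>\<^sup>2 = 16 * K\<^sup>2 * L / \<epsilon>\<^sup>2"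
      unfolding \<sigma>_def using L by (simp add: power_divide power_mult_distrib)
    show ?thesis unfolding \<sigma>2 l_def using \<epsilon> K L by (simp add: field_simps power2_eq_square)
  qed
  also have "\<dots> \<le> L" using \<epsilon> L by simp
  finally have "- l * \<epsilon> + l * (l + 1) * S / (2 * \<sigma>\<^sup>2) \<le> - L"
    unfolding l_def using \<epsilon> by simp
  then have "exp (- l * \<epsilon> + l * (l + 1) * S / (2 * \<sigma>\<^sup>2)) \<le> exp (- L)" by simp
  also have "exp (- L) = \<delta>" unfolding L_def using \<delta> by (simp add: ln_div)
  finally show ?thesis .
qed

lemma sqrt_of_nat_le: "sqrt (real n) \<le> real n"
proof (cases "n = 0")
  case False
  then have "sqrt (real n) * 1 \<le> sqrt (real n) * sqrt (real n)" by (intro mult_left_mono) auto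
  then show ?thesis by simp
qed simp

definition gaussian_noise_scale :: "real \<Rightarrow> real \<Rightarrow> nat \<Rightarrow> nat \<Rightarrow> real" where
  "gaussian_noise_scale \<epsilon> \<delta> n D = 4 * (real D + sqrt (real n) + 1) * sqrt (ln (1 / \<delta>)) / \<epsilon>"

lemma gaussian_noise_scale_pos:
  "0 < \<epsilon> \<Longrightarrow> 0 < \<delta> \<Longrightarrow> \<delta> < 1 \<Longrightarrow> 0 < gaussian_noise_scale \<epsilon> \<delta> n D"
  unfolding gaussian_noise_scale_def by (simp add: add_nonneg_pos)

lemma LNDP_gaussian_degree_mechanism:
  assumes \<epsilon>: "0 < \<epsilon>" "\<epsilon> < 1" and \<delta>: "0 < \<delta>" "\<delta> \<le> 1/2"
  shows "LNDP n \<epsilon> \<delta> Rho (gaussian_degree_randomizer (gaussian_noise_scale \<epsilon> \<delta> n D) D) (half_sum n)"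
proof (rule LNDP_gaussian_degree_randomizer)
  define K where "K = real D + sqrt (real n) + 1"
  have "0 < K" unfolding K_def by (simp add: add_nonneg_pos)
  show "0 < gaussian_noise_scale \<epsilon> \<delta> n D" using \<epsilon> \<delta> by (simp add: gaussian_noise_scale_pos)
  show "0 \<le> 2 * ln (1 / \<delta>) / \<epsilon>" using \<epsilon> \<delta> by simp
  have "(real D)\<^sup>2 + real n \<le> K\<^sup>2"
    unfolding K_def by (simp add: power2_eq_square algebra_simps)
  then show "exp (- (2 * ln (1 / \<delta>) / \<epsilon>) * \<epsilon> + 2 * ln (1 / \<delta>) / \<epsilon> * (2 * ln (1 / \<delta>) / \<epsilon> + 1)
      * ((real D)\<^sup>2 + real n) / (2 * (gaussian_noise_scale \<epsilon> \<delta> n D)\<^sup>2)) \<le> \<delta>"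
    unfolding gaussian_noise_scale_def K_def[symmetric]
    by (rule exp_gaussian_privacy_loss_le[OF \<epsilon> \<delta> \<open>0 < K\<close>])
qed

lemma expected_abs_error_gaussian_degree_mechanism_le:
  assumes \<epsilon>: "0 < \<epsilon>" and \<delta>: "0 < \<delta>" "\<delta> < 1"
    and "graph_on n E" "max_degree_le n E D"
  shows "expected_abs_error n (return_pmf 0)
      (gaussian_degree_randomizer (gaussian_noise_scale \<epsilon> \<delta> n D) D) (half_sum n) E
    \<le> ennreal (16 * (real D * sqrt n + n) * sqrt (ln (1 / \<delta>)) / \<epsilon>)"
proof -
  let ?\<sigma> = "gaussian_noise_scale \<epsilon> \<delta> n D"
  have "2 * ?\<sigma> * sqrt n = 8 * ((real D + sqrt n + 1) * sqrt n) * sqrt (ln (1 / \<delta>)) / \<epsilon>"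
    unfolding gaussian_noise_scale_def by simp
  also have "\<dots> \<le> 8 * (2 * (real D * sqrt n + n)) * sqrt (ln (1 / \<delta>)) / \<epsilon>"
  proof -
    have "(real D + sqrt n + 1) * sqrt n \<le> 2 * (real D * sqrt n + n)"
      using sqrt_of_nat_le[of n] by (simp add: algebra_simps add_increasing2)
    then show ?thesis using \<epsilon> \<delta> by (intro divide_right_mono mult_right_mono mult_left_mono) auto
  qed
  finally have "2 * ?\<sigma> * sqrt n \<le> 16 * (real D * sqrt n + n) * sqrt (ln (1 / \<delta>)) / \<epsilon>"
    by simp
  moreover have "expected_abs_error n (return_pmf 0) (gaussian_degree_randomizer ?\<sigma> D) (half_sum n) E
      \<le> ennreal (2 * ?\<sigma> * sqrt n)"
    using assms by (simp add: expected_abs_error_def nn_integral_abs_half_sum_error_le gaussian_noise_scale_pos)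
  ultimately show ?thesis by (meson ennreal_leI order_trans)
qed

theorem theorem3p3:
  shows "\<exists>C::real. C > 0 \<and>
    (\<forall>(\<epsilon>::real) (\<delta>::real) (n::nat) (D::nat).
       0 < \<epsilon> \<and> \<epsilon> < 1 \<and> 0 < \<delta> \<and> \<delta> \<le> 1/2 \<longrightarrow>
       (\<exists>Rho R P. LNDP n \<epsilon> \<delta> Rho R P \<and>
          (\<forall>E. graph_on n E \<and> max_degree_le n E D \<longrightarrow>
             expected_abs_error n Rho R P E
               \<le> ennreal (C * (real D * sqrt (real n) + real n) * sqrt (ln (1 / \<delta>)) / \<epsilon>))))"
proof (intro exI[of _ 16] conjI allI impI)
  fix \<epsilon> \<delta> :: real and n D :: nat
  assume "0 < \<epsilon> \<and> \<epsilon> < 1 \<and> 0 < \<delta> \<and> \<delta> \<le> 1/2"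
  then have \<epsilon>: "0 < \<epsilon>" "\<epsilon> < 1" and \<delta>: "0 < \<delta>" "\<delta> \<le> 1/2" by auto
  let ?R = "gaussian_degree_randomizer (gaussian_noise_scale \<epsilon> \<delta> n D) D"
  have "LNDP n \<epsilon> \<delta> (return_pmf 0) ?R (half_sum n)"
    using LNDP_gaussian_degree_mechanism[OF \<epsilon> \<delta>] .
  moreover have "expected_abs_error n (return_pmf 0) ?R (half_sum n) E
      \<le> ennreal (16 * (real D * sqrt n + n) * sqrt (ln (1 / \<delta>)) / \<epsilon>)"
    if "graph_on n E \<and> max_degree_le n E D" for E
    using that \<epsilon> \<delta> by (intro expected_abs_error_gaussian_degree_mechanism_le) auto
  ultimately show "\<exists>Rho R P. LNDP n \<epsilon> \<delta> Rho R P \<and>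
      (\<forall>E. graph_on n E \<and> max_degree_le n E D \<longrightarrow>
         expected_abs_error n Rho R P E
           \<le> ennreal (16 * (real D * sqrt n + n) * sqrt (ln (1 / \<delta>)) / \<epsilon>))"
    by blast
qed simp

end
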